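(* Let $f=\prod_{i=1}^n(y-a_i)\in\overline K[y]$ be reduced ($a_i$ pairwise distinct, $n\ge2$) with $\nu(a_i)>0$ for all $i$. The complete magic matrix $\mathcal A$ induces an automorphism $\mathcal A_{|\overline{\mathcal F}}$ of $\overline{\mathcal F}$. Moreover, the inverse $(\mathcal A_{|\overline{\mathcal F}})^{-1}$ has graded degree $+1$ and its graded map is $(A_{|F})^{-1}$: for every $r\in\mathbf Q$ and $w\in\overline{\mathcal F}_r$, $(\mathcal A_{|\overline{\mathcal F}})^{-1}w\in\overline{\mathcal F}_{r+1}$ and $\mathrm{in}_{r+1}\bigl((\mathcal A_{|\overline{\mathcal F}})^{-1}w\bigr)=(A_{|F})^{-1}\,\mathrm{in}_r(w)$.
   Context: $\overline K=\bigcup_{d\ge1}\mathbf C[[x^{1/d}]][1/x]$ with valuation $\nu$, $'$ denotes $d/dx$. $\overline{\mathcal E}$ is the $\overline K$-space of polynomials in $y$ of degree $<n$, with basis $\varepsilon_i=\prod_{j\ne i}(y-a_j)$; $\overline{\mathcal F}=\{\sum u_i\varepsilon_i:\sum u_i=0\}$ (the polynomials of degree $<n-1$). $\mathrm{val}(\sum w_i\varepsilon_i)=\inf_i\nu(w_i)$; $\overline{\mathcal F}_r=\{w\in\overline{\mathcal F}:\mathrm{val}(w)\ge r\}$; $\mathrm{in}_r(w)\in\mathbf C^n$ is the vector of coefficients of $x^r$ in the $w_i$. $\mathcal A$ is the symmetric matrix over $\overline K$ with off-diagonal entries $-(a'_i-a'_j)/(a_i-a_j)$ and diagonal entries $\sum_{j\ne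 i}(a'_i-a'_j)/(a_i-a_j)$, acting on coordinates in the basis $(\varepsilon_i)$. $A$ is the rational matrix with entries $-m_{i,j}$ off the diagonal and $m_i=\sum_{j\ne i}m_{i,j}$ on the diagonal, where $m_{i,j}=\nu(a_i-a_j)$; $F=\{W\in\mathbf C^n:\sum W_i=0\}$ and $A_{|F}$ is the restriction of $A$ to $F$ (which is invertible). *)

theory Defs
  imports "HOL-Computational_Algebra.Formal_Laurent_Series"
begin

text \<open>A finite family of Puiseux series always lies in a common field
 C((t)) with t = x^(1/d). Elements of that field are represented as
 complex fls in the variable t. Exponent k of t is exponent k/d of x.\<close>

definition xderiv :: "nat \<Rightarrow> complex fls \<Rightarrow> complex fls" where
  "xderiv d g = fls_deriv g * fls_const (1 / of_nat d) * fls_X_intpow (1 - int d)"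

definition pval :: "nat \<Rightarrow> complex fls \<Rightarrow> rat" where
  "pval d g = of_int (fls_subdegree g) / of_nat d"

definition qmag :: "nat \<Rightarrow> ('n \<Rightarrow> complex fls) \<Rightarrow> 'n \<Rightarrow> 'n \<Rightarrow> complex fls" where
  "qmag d a i j = (xderiv d (a i) - xderiv d (a j)) / (a i - a j)"

definition magic :: "nat \<Rightarrow> ('n::finite \<Rightarrow> complex fls) \<Rightarrow> 'n \<Rightarrow> 'n \<Rightarrow> complex fls" where
  "magic d a i j = (if i = j then (\<Sum>k\<in>UNIV - {i}. qmag d a i k) else - qmag d a i j)"

definition valmat :: "nat \<Rightarrow> ('n::finite \<Rightarrow> complex fls) \<Rightarrow> 'n \<Rightarrow> 'n \<Rightarrow> rat" where
  "valmat d a i j = (if i = j then (\<Sum>k\<in>UNIV - {i}. pval d (a i - a k)) else - pval d (a i - a j))"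

definition mvec :: "('n::finite \<Rightarrow> 'n \<Rightarrow> 'a::comm_semiring_0) \<Rightarrow> ('n \<Rightarrow> 'a) \<Rightarrow> 'n \<Rightarrow> 'a" where
  "mvec M v = (\<lambda>i. \<Sum>j\<in>UNIV. M i j * v j)"

definition Fbar :: "('n::finite \<Rightarrow> complex fls) set" where
  "Fbar = {w. (\<Sum>i\<in>UNIV. w i) = 0}"

definition Fc :: "('n::finite \<Rightarrow> complex) set" where
  "Fc = {W. (\<Sum>i\<in>UNIV. W i) = 0}"

definition val_ge :: "nat \<Rightarrow> rat \<Rightarrow> ('n \<Rightarrow> complex fls) \<Rightarrow> bool" where
  "val_ge d r w \<longleftrightarrow> (\<forall>i k. of_int k / of_nat d < r \<longrightarrow> fls_nth (w i) k = 0)"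

definition initial :: "nat \<Rightarrow> rat \<Rightarrow> ('n \<Rightarrow> complex fls) \<Rightarrow> 'n \<Rightarrow> complex" where
  "initial d r w i = (if r * of_nat d \<in> \<int> then fls_nth (w i) \<lfloor>r * of_nat d\<rfloor> else 0)"

end

theory Submission
  imports Defs "HOL-Analysis.Cartesian_Space" "HOL-Library.Function_Algebras"
begin

text \<open>Every entry of the magic matrix has valuation at least \<open>-1\<close>, and its coefficient of
 \<open>x\<^sup>-\<^sup>1\<close> is the corresponding entry of \<open>A\<close>; so \<open>\<A> = x\<^sup>-\<^sup>1 A + (higher order terms)\<close>.
 The matrix \<open>A\<close> is a graph Laplacian with positive weights \<open>m\<^sub>i\<^sub>,\<^sub>j\<close>, hence injective on
 \<open>F\<close> by the maximum principle. Consequently, if \<open>w \<in> \<F>\<close> has lowest order \<open>s\<close>, the coefficient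
 of \<open>x\<^sup>s\<^sup>-\<^sup>1\<close> in \<open>\<A> w\<close> is \<open>A\<close> applied to the nonzero lowest coefficient vector of \<open>w\<close>, which
 lies in \<open>F\<close>; so \<open>\<A>\<close> lowers the valuation on \<open>\<F>\<close> by exactly one. This gives injectivity,
 surjectivity follows by finite dimension (the columns of \<open>\<A>\<close> sum to zero), and reading
 the statement backwards gives the graded description of the inverse.\<close>

lemma fls_times_nth_below:
  fixes f g :: "'a::{comm_monoid_add,mult_zero} fls"
  assumes f: "\<forall>k<p. fls_nth f k = 0" and g: "\<forall>k<s. fls_nth g k = 0"
  shows "\<forall>k<p+s. fls_nth (f * g) k = 0" and "fls_nth (f * g) (p + s) = fls_nth f p * fls_nth g s"
proof -
  have "(\<forall>k<p+s. fls_nth (f * g) k = 0) \<and> fls_nth (f * g) (p + s) = fls_nth f p * fls_nth g s"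
  proof (cases "f = 0 \<or> g = 0")
    case False
    then have df: "p \<le> fls_subdegree f" and dg: "s \<le> fls_subdegree g"
      using fls_subdegree_geI f g by auto
    have "fls_nth (f * g) (p + s) = fls_nth f p * fls_nth g s"
    proof (cases "p = fls_subdegree f \<and> s = fls_subdegree g")
      case True
      then show ?thesis by simp
    next
      case False
      then show ?thesis using df dg by (auto intro!: fls_times_nth_eq0)
    qed
    with df dg show ?thesis by (auto intro: fls_times_nth_eq0)
  qed auto
  then show "\<forall>k<p+s. fls_nth (f * g) k = 0"
    and "fls_nth (f * g) (p + s) = fls_nth f p * fls_nth g s" by auto
qed

lemma fls_times_nth_below_cancel:
  fixes f g :: "'a::idom fls"
  assumes fg: "\<forall>k<p+s. fls_nth (f * g) k = 0" and g: "\<forall>k<s. fls_nth g k = 0"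
    and gs: "fls_nth g s \<noteq> 0"
  shows "\<forall>k<p. fls_nth f k = 0"
proof (cases "f = 0")
  case False
  have "g \<noteq> 0" using gs by auto
  have "fls_subdegree g = s"
    using fls_subdegree_geI[OF \<open>g \<noteq> 0\<close>, of s] g fls_subdegree_leI[OF gs] by auto
  moreover have "p + s \<le> fls_subdegree (f * g)"
    using fls_subdegree_geI fg False \<open>g \<noteq> 0\<close> by (metis mult_eq_0_iff)
  ultimately have "p \<le> fls_subdegree f" using False \<open>g \<noteq> 0\<close> by simp
  then show ?thesis by auto
qed auto

lemma mvec_zero [simp]: "mvec M 0 = 0"
  by (simp add: mvec_def fun_eq_iff)

lemma mvec_diff:
  fixes M :: "'n::finite \<Rightarrow> 'n \<Rightarrow> 'a::comm_ring"
  shows "mvec M (v - u) = mvec M v - mvec M u"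
  by (simp add: mvec_def fun_eq_iff right_diff_distrib sum_subtractf)

lemma sum_mvec_eq_zero:
  fixes M :: "'n::finite \<Rightarrow> 'n \<Rightarrow> 'a::comm_semiring_0"
  assumes cols: "\<And>j. (\<Sum>i\<in>UNIV. M i j) = 0"
  shows "(\<Sum>i\<in>UNIV. mvec M v i) = 0"
proof -
  have "(\<Sum>i\<in>UNIV. mvec M v i) = (\<Sum>j\<in>UNIV. (\<Sum>i\<in>UNIV. M i j) * v j)"
    unfolding mvec_def sum_distrib_right by (rule sum.swap)
  then show ?thesis by (simp add: cols)
qed

lemma mvec_inj_on_sum_zeroI:
  fixes M :: "'n::finite \<Rightarrow> 'n \<Rightarrow> 'a::comm_ring"
  assumes ker: "\<And>v. (\<Sum>i\<in>UNIV. v i) = 0 \<Longrightarrow> mvec M v = 0 \<Longrightarrow> v = 0"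
  shows "inj_on (mvec M) {v. (\<Sum>i\<in>UNIV. v i) = 0}"
proof (rule inj_onI)
  fix v u assume v: "v \<in> {v. (\<Sum>i\<in>UNIV. v i) = 0}" and u: "u \<in> {v. (\<Sum>i\<in>UNIV. v i) = 0}"
    and eq: "mvec M v = mvec M u"
  have "(\<Sum>i\<in>UNIV. (v - u) i) = 0" using v u by (simp add: sum_subtractf)
  moreover have "mvec M (v - u) = 0" using eq by (simp add: mvec_diff)
  ultimately have "v - u = 0" by (rule ker)
  then show "v = u" by simp
qed

text \<open>The rank one perturbation \<open>v \<mapsto> M v + (\<Sum>v) e\<^sub>i\<^sub>0\<close> preserves the coordinate sum and is
 injective on the whole space, hence surjective; preimages of sum zero vectors have sum zero.\<close>

lemma mvec_onto_sum_zero: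
  fixes M :: "'n::finite \<Rightarrow> 'n \<Rightarrow> 'a::field"
  assumes cols: "\<And>j. (\<Sum>i\<in>UNIV. M i j) = 0"
    and ker: "\<And>v. (\<Sum>i\<in>UNIV. v i) = 0 \<Longrightarrow> mvec M v = 0 \<Longrightarrow> v = 0"
    and w: "(\<Sum>i\<in>UNIV. w i) = 0"
  obtains v where "(\<Sum>i\<in>UNIV. v i) = 0" "mvec M v = w"
proof -
  fix i0 :: 'n
  define E :: "'a^'n^'n" where "E = (\<chi> i j. M i j + (if i = i0 then 1 else 0))"
  have E: "vec_nth (E *v u) i =
      mvec M (vec_nth u) i + (if i = i0 then (\<Sum>j\<in>UNIV. vec_nth u j) else 0)" for u i
    unfolding E_def matrix_vector_mult_def mvec_def by (simp add: distrib_right sum.distrib)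
  have sum_E: "(\<Sum>i\<in>UNIV. vec_nth (E *v u) i) = (\<Sum>j\<in>UNIV. vec_nth u j)" for u
    unfolding E sum.distrib using sum_mvec_eq_zero[OF cols] by simp
  have "u = 0" if "E *v u = 0" for u
  proof -
    have sum_u: "(\<Sum>j\<in>UNIV. vec_nth u j) = 0" using sum_E[of u] that by simp
    moreover have "mvec M (vec_nth u) i = 0" for i
      using E[of u i] by (simp add: that sum_u cong: if_cong)
    then have "mvec M (vec_nth u) = 0" by (simp add: fun_eq_iff)
    ultimately have "vec_nth u = 0" by (rule ker)
    then show ?thesis by (simp add: vec_eq_iff)
  qed
  then have "inj ((*v) E)"
    by (intro injI) (metis eq_iff_diff_eq_0 matrix_vector_mult_diff_distrib)
  then have "surj ((*v) E)" by (rule vec.linear_inj_imp_surj[OF matrix_vector_mul_linear_gen])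
  then obtain u where u: "E *v u = vec_lambda w" by (metis surjD)
  have sum_u: "(\<Sum>j\<in>UNIV. vec_nth u j) = 0" using sum_E[of u] u w by simp
  moreover have "mvec M (vec_nth u) = w" using E[of u] u sum_u by (simp add: fun_eq_iff)
  ultimately show ?thesis by (rule that)
qed

lemma laplacian_kernel_constant:
  fixes L :: "'n::finite \<Rightarrow> 'n \<Rightarrow> real"
  assumes off: "\<And>i j. i \<noteq> j \<Longrightarrow> L i j < 0" and rows: "\<And>i. (\<Sum>j\<in>UNIV. L i j) = 0"
    and ker: "\<And>i. (\<Sum>j\<in>UNIV. L i j * X j) = 0"
  shows "X j = X k"
proof -
  have "Max (range X) \<in> range X" by (rule Max_in) auto
  then obtain i0 where "X i0 = Max (range X)" by (metis imageE)
  then have max: "X j \<le> X i0" for j by simp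
  have "(\<Sum>j\<in>UNIV. L i0 j * (X j - X i0)) = 0"
    using ker[of i0] rows[of i0] by (simp add: right_diff_distrib sum_subtractf flip: sum_distrib_right)
  moreover have "0 \<le> L i0 j * (X j - X i0)" for j
    using off[of i0 j] max[of j] by (cases "j = i0") (auto intro: mult_nonpos_nonpos)
  ultimately have zero: "L i0 j * (X j - X i0) = 0" for j by (simp add: sum_nonneg_eq_0_iff)
  have "X j = X i0" for j using zero[of j] off[of i0 j] by (cases "j = i0") auto
  then show ?thesis by metis
qed

lemma of_rat_complex_eq: "(of_rat q :: complex) = of_real (of_rat q)"
  by (cases q) (simp add: of_rat_rat)

lemma laplacian_inj_on_sum_zero:
  fixes L :: "'n::finite \<Rightarrow> 'n \<Rightarrow> rat"
  assumes off: "\<And>i j. i \<noteq> j \<Longrightarrow> L i j < 0" and rows: "\<And>i. (\<Sum>j\<in>UNIV. L i j) = 0"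
  shows "inj_on (mvec (\<lambda>i j. of_rat (L i j) :: complex)) {W. (\<Sum>i\<in>UNIV. W i) = 0}"
proof (rule mvec_inj_on_sum_zeroI)
  fix W :: "'n \<Rightarrow> complex"
  assume sum_W: "(\<Sum>i\<in>UNIV. W i) = 0" and ker: "mvec (\<lambda>i j. of_rat (L i j)) W = 0"
  let ?L = "\<lambda>i j. real_of_rat (L i j)"
  have off': "?L i j < 0" if "i \<noteq> j" for i j
    using off[OF that] by simp
  have rows': "(\<Sum>j\<in>UNIV. ?L i j) = 0" for i
    using rows by (simp flip: of_rat_sum)
  have ker': "(\<Sum>j\<in>UNIV. of_real (?L i j) * W j) = 0" for i
    using fun_cong[OF ker, of i] by (simp add: mvec_def of_rat_complex_eq)
  have re: "(\<Sum>j\<in>UNIV. ?L i j * Re (W j)) = 0" for i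
    using arg_cong[OF ker'[of i], of Re] by (simp add: Re_sum)
  have im: "(\<Sum>j\<in>UNIV. ?L i j * Im (W j)) = 0" for i
    using arg_cong[OF ker'[of i], of Im] by (simp add: Im_sum)
  have "Re (W j) = Re (W k)" "Im (W j) = Im (W k)" for j k
    using laplacian_kernel_constant[where L = ?L and X = "\<lambda>j. Re (W j)"]
      laplacian_kernel_constant[where L = ?L and X = "\<lambda>j. Im (W j)"] off' rows' re im
    by blast+
  then have "W j = W k" for j k by (simp add: complex_eqI)
  then obtain c where const: "W = (\<lambda>_. c)" by (metis ext)
  then have "of_nat (card (UNIV :: 'n set)) * c = 0" using sum_W by simp
  then show "W = 0" using const by (simp add: fun_eq_iff)
qed

lemma fls_family_lowest_coeff:
  fixes v :: "'n::finite \<Rightarrow> 'a::zero fls"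
  assumes "fls_nth (v j) l \<noteq> 0"
  obtains s j0 where "s \<le> l" "fls_nth (v j0) s \<noteq> 0" "\<forall>j l. l < s \<longrightarrow> fls_nth (v j) l = 0"
proof -
  let ?S = "(\<lambda>j. fls_subdegree (v j)) ` {j. v j \<noteq> 0}"
  have "v j \<noteq> 0" using assms by auto
  then have fin: "finite ?S" and ne: "?S \<noteq> {}" by auto
  define s where "s = Min ?S"
  have "s \<in> ?S" unfolding s_def using fin ne by (rule Min_in)
  then obtain j0 where j0: "v j0 \<noteq> 0" "fls_subdegree (v j0) = s" by auto
  have le: "s \<le> fls_subdegree (v k)" if "v k \<noteq> 0" for k
    unfolding s_def using fin that by (intro Min_le) auto
  show ?thesis
  proof (rule that)
    show "s \<le> l" using le[OF \<open>v j \<noteq> 0\<close>] fls_subdegree_leI[OF assms] by simp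
    show "fls_nth (v j0) s \<noteq> 0" using j0 by (metis nth_fls_subdegree_nonzero)
    show "\<forall>k m. m < s \<longrightarrow> fls_nth (v k) m = 0"
    proof (intro allI impI)
      fix k m assume "m < s"
      then show "fls_nth (v k) m = 0" using le[of k] by (cases "v k = 0") auto
    qed
  qed
qed

lemma fls_nth_xderiv:
  "fls_nth (xderiv d f) k = of_int (k + int d) * fls_nth f (k + int d) / of_nat d"
  unfolding xderiv_def fls_X_intpow_times_conv_shift(2) fls_shift_nth fls_mult_const_nth fls_deriv_nth
  by (cases "d = 0") (simp_all add: field_simps)

lemma xderiv_diff: "xderiv d (f - g) = xderiv d f - xderiv d g"
  unfolding xderiv_def by (simp add: algebra_simps)

lemma qmag_lowest_coeffs:
  assumes "a i \<noteq> a j"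
  shows "\<forall>k < - int d. fls_nth (qmag d a i j) k = 0"
    and "fls_nth (qmag d a i j) (- int d) = of_rat (pval d (a i - a j))"
proof -
  define D where "D = a i - a j"
  define e where "e = fls_subdegree D"
  have "D \<noteq> 0" using assms by (simp add: D_def)
  then have QD: "qmag d a i j * D = xderiv d D"
    unfolding qmag_def D_def xderiv_diff by simp
  have D_low: "\<forall>k<e. fls_nth D k = 0" and D_lead: "fls_nth D e \<noteq> 0"
    using \<open>D \<noteq> 0\<close> by (simp_all add: e_def)
  have "\<forall>k < - int d + e. fls_nth (qmag d a i j * D) k = 0"
    unfolding QD fls_nth_xderiv by (simp add: e_def)
  then show low: "\<forall>k < - int d. fls_nth (qmag d a i j) k = 0"
    using fls_times_nth_below_cancel D_low D_lead by blast
  have "fls_nth (qmag d a i j) (- int d) * fls_nth D e =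
      fls_nth (qmag d a i j * D) (- int d + e)"
    using fls_times_nth_below(2)[OF low D_low] by simp
  also have "\<dots> = of_int e / of_nat d * fls_nth D e"
    unfolding QD fls_nth_xderiv by simp
  finally have "fls_nth (qmag d a i j) (- int d) = of_int e / of_nat d"
    using mult_right_cancel[OF D_lead] by blast
  then show "fls_nth (qmag d a i j) (- int d) = of_rat (pval d (a i - a j))"
    by (simp add: pval_def e_def D_def of_rat_divide)
qed

lemma magic_lowest_coeffs:
  assumes "inj a"
  shows "\<forall>k < - int d. fls_nth (magic d a i j) k = 0"
    and "fls_nth (magic d a i j) (- int d) = of_rat (valmat d a i j)"
proof -
  have ne: "a i \<noteq> a k" if "k \<noteq> i" for k using assms that by (auto dest: injD)
  have "(\<forall>k < - int d. fls_nth (magic d a i j) k = 0) \<and>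
    fls_nth (magic d a i j) (- int d) = of_rat (valmat d a i j)"
  proof (cases "i = j")
    case True
    then have M: "magic d a i j = (\<Sum>k\<in>UNIV - {i}. qmag d a i k)"
      and V: "valmat d a i j = (\<Sum>k\<in>UNIV - {i}. pval d (a i - a k))"
      by (simp_all add: magic_def valmat_def)
    show ?thesis
      unfolding M V fls_nth_sum of_rat_sum
      using qmag_lowest_coeffs[of a i, OF ne] by (auto intro!: sum.neutral sum.cong)
  next
    case False
    then show ?thesis
      using ne[of j] qmag_lowest_coeffs[of a i j] by (simp add: magic_def valmat_def of_rat_minus)
  qed
  then show "\<forall>k < - int d. fls_nth (magic d a i j) k = 0"
    and "fls_nth (magic d a i j) (- int d) = of_rat (valmat d a i j)" by auto
qed

lemma mvec_magic_lowest_coeffs: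
  assumes "inj a" and v: "\<forall>j l. l < s \<longrightarrow> fls_nth (v j) l = 0"
  shows "\<forall>k < s - int d. fls_nth (mvec (magic d a) v i) k = 0"
    and "fls_nth (mvec (magic d a) v i) (s - int d) =
      mvec (\<lambda>i j. of_rat (valmat d a i j)) (\<lambda>j. fls_nth (v j) s) i"
proof -
  have s: "s - int d = - int d + s" by simp
  have "\<forall>l<s. fls_nth (v j) l = 0" for j using v by simp
  note prod = fls_times_nth_below[OF magic_lowest_coeffs(1)[OF \<open>inj a\<close>] this]
  show "\<forall>k < s - int d. fls_nth (mvec (magic d a) v i) k = 0"
    unfolding mvec_def fls_nth_sum s using prod(1) by simp
  show "fls_nth (mvec (magic d a) v i) (s - int d) =
      mvec (\<lambda>i j. of_rat (valmat d a i j)) (\<lambda>j. fls_nth (v j) s) i"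
    unfolding mvec_def fls_nth_sum s using prod(2)
    by (simp add: magic_lowest_coeffs(2)[OF \<open>inj a\<close>])
qed

lemma magic_col_sum: "(\<Sum>i\<in>UNIV. magic d a i j) = 0"
proof -
  have qmag_sym: "qmag d a i j = qmag d a j i" for i j
    unfolding qmag_def by (metis minus_diff_eq minus_divide_divide)
  have "(\<Sum>i\<in>UNIV. magic d a i j) = magic d a j j + (\<Sum>i\<in>UNIV - {j}. magic d a i j)"
    by (simp add: sum.remove)
  also have "\<dots> = (\<Sum>k\<in>UNIV - {j}. qmag d a j k - qmag d a k j)"
    by (simp add: magic_def sum_subtractf sum_negf)
  finally show ?thesis by (simp add: qmag_sym)
qed

lemma valmat_row_sum: "(\<Sum>j\<in>UNIV. valmat d a i j) = 0"
  by (simp add: sum.remove[of UNIV i] valmat_def sum_negf)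

lemma val_ge_iff_ceiling:
  assumes "1 \<le> d"
  shows "val_ge d r w \<longleftrightarrow> (\<forall>i k. k < \<lceil>r * of_nat d\<rceil> \<longrightarrow> fls_nth (w i) k = 0)"
  using assms unfolding val_ge_def by (simp add: pos_divide_less_eq less_ceiling_iff)

lemma initial_in_Fc: "w \<in> Fbar \<Longrightarrow> initial d r w \<in> Fc"
  by (cases "r * of_nat d \<in> \<int>") (simp_all add: initial_def Fc_def Fbar_def flip: fls_nth_sum)

locale distinct_positive_roots =
  fixes d :: nat and a :: "'n::finite \<Rightarrow> complex fls"
  assumes d_pos: "1 \<le> d" and inj_roots: "inj a"
    and roots_pos: "\<forall>i. \<forall>k \<le> 0. fls_nth (a i) k = 0"
begin

lemma valmat_offdiag_neg:
  assumes "i \<noteq> j"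
  shows "valmat d a i j < 0"
proof -
  have "a i - a j \<noteq> 0" using inj_roots assms by (auto dest: injD)
  then have "1 \<le> fls_subdegree (a i - a j)"
    using roots_pos by (intro fls_subdegree_geI) auto
  then show ?thesis using assms d_pos by (simp add: valmat_def pval_def)
qed

lemma valmat_inj_on_Fc: "inj_on (mvec (\<lambda>i j. of_rat (valmat d a i j))) Fc"
  unfolding Fc_def by (rule laplacian_inj_on_sum_zero[OF valmat_offdiag_neg valmat_row_sum])

lemma magic_leading_coeff_nonzero:
  assumes "v \<in> Fbar" and low: "\<forall>j l. l < s \<longrightarrow> fls_nth (v j) l = 0"
    and "fls_nth (v j) s \<noteq> 0"
  shows "\<exists>i. fls_nth (mvec (magic d a) v i) (s - int d) \<noteq> 0"
proof (rule ccontr)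
  define V where "V = (\<lambda>j. fls_nth (v j) s)"
  assume "\<nexists>i. fls_nth (mvec (magic d a) v i) (s - int d) \<noteq> 0"
  then have "mvec (\<lambda>i j. of_rat (valmat d a i j)) V = mvec (\<lambda>i j. of_rat (valmat d a i j)) 0"
    using mvec_magic_lowest_coeffs(2)[OF inj_roots low] by (simp add: V_def fun_eq_iff)
  moreover have "V \<in> Fc" using \<open>v \<in> Fbar\<close> by (simp add: V_def Fc_def Fbar_def flip: fls_nth_sum)
  moreover have "0 \<in> Fc" by (simp add: Fc_def)
  ultimately have "V = 0" by (rule inj_onD[OF valmat_inj_on_Fc])
  then show False using assms(3) by (simp add: V_def fun_eq_iff)
qed

lemma magic_preimage_vanishing_below:
  assumes "v \<in> Fbar" and Mv: "\<forall>i k. k < K \<longrightarrow> fls_nth (mvec (magic d a) v i) k = 0"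
  shows "\<forall>j l. l < K + int d \<longrightarrow> fls_nth (v j) l = 0"
proof (intro allI impI, rule ccontr)
  fix j l assume "l < K + int d" and nz: "fls_nth (v j) l \<noteq> 0"
  obtain s j0 where "s \<le> l" and lead: "fls_nth (v j0) s \<noteq> 0"
    and low: "\<forall>j l. l < s \<longrightarrow> fls_nth (v j) l = 0"
    using fls_family_lowest_coeff[of v, OF nz] by blast
  obtain i where "fls_nth (mvec (magic d a) v i) (s - int d) \<noteq> 0"
    using magic_leading_coeff_nonzero[OF \<open>v \<in> Fbar\<close> low lead] by blast
  moreover have "s - int d < K" using \<open>s \<le> l\<close> \<open>l < K + int d\<close> by simp
  ultimately show False using Mv by simp
qed

lemma magic_kernel_Fbar:
  assumes "v \<in> Fbar" and "mvec (magic d a) v = 0"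
  shows "v = 0"
proof -
  have "fls_nth (v j) l = 0" for j l
    using magic_preimage_vanishing_below[OF \<open>v \<in> Fbar\<close>, of "l - int d + 1"] assms(2)
    by (simp add: zero_fun_def)
  then show ?thesis by (simp add: fun_eq_iff fls_eq_iff)
qed

lemma magic_bij_Fbar: "bij_betw (mvec (magic d a)) Fbar Fbar"
proof -
  have ker: "\<And>v. (\<Sum>i\<in>UNIV. v i) = 0 \<Longrightarrow> mvec (magic d a) v = 0 \<Longrightarrow> v = 0"
    using magic_kernel_Fbar by (simp add: Fbar_def)
  have "inj_on (mvec (magic d a)) Fbar"
    unfolding Fbar_def by (rule mvec_inj_on_sum_zeroI[OF ker])
  moreover have "mvec (magic d a) ` Fbar \<subseteq> Fbar"
    using sum_mvec_eq_zero[of "magic d a", OF magic_col_sum] by (auto simp: Fbar_def)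
  moreover have "Fbar \<subseteq> mvec (magic d a) ` Fbar"
  proof
    fix w :: "'n \<Rightarrow> complex fls" assume "w \<in> Fbar"
    then obtain v where "(\<Sum>i\<in>UNIV. v i) = 0" "mvec (magic d a) v = w"
      using mvec_onto_sum_zero[of "magic d a", OF magic_col_sum ker] by (auto simp: Fbar_def)
    then show "w \<in> mvec (magic d a) ` Fbar" by (auto simp: Fbar_def)
  qed
  ultimately show ?thesis by (auto simp: bij_betw_def)
qed

lemma val_ge_magic_preimage:
  assumes "v \<in> Fbar" and "val_ge d r (mvec (magic d a) v)"
  shows "val_ge d (r + 1) v"
proof -
  have "\<lceil>(r + 1) * of_nat d\<rceil> = \<lceil>r * of_nat d\<rceil> + int d"
    by (simp add: distrib_right flip: ceiling_add_of_int)
  then show ?thesis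
    using magic_preimage_vanishing_below[OF \<open>v \<in> Fbar\<close>] assms(2)
    by (simp add: val_ge_iff_ceiling[OF d_pos])
qed

lemma initial_magic:
  assumes "val_ge d (r + 1) v"
  shows "initial d r (mvec (magic d a) v) =
    mvec (\<lambda>i j. of_rat (valmat d a i j)) (initial d (r + 1) v)"
proof (cases "r * of_nat d \<in> \<int>")
  case True
  then obtain k where k: "r * of_nat d = of_int k" by (auto elim: Ints_cases)
  then have r1: "(r + 1) * of_nat d = of_int (k + int d)" by (simp add: algebra_simps)
  have "\<lceil>(r + 1) * of_nat d\<rceil> = k + int d" unfolding r1 by (rule ceiling_of_int)
  then have "\<forall>j l. l < k + int d \<longrightarrow> fls_nth (v j) l = 0"
    using assms by (simp add: val_ge_iff_ceiling[OF d_pos])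
  from mvec_magic_lowest_coeffs(2)[where d = d, OF inj_roots this] show ?thesis
    unfolding initial_def k r1 by (simp add: fun_eq_iff)
next
  case False
  have "(r + 1) * of_nat d \<notin> \<int>"
  proof
    assume "(r + 1) * of_nat d \<in> \<int>"
    then have "(r + 1) * of_nat d - of_nat d \<in> \<int>" by (intro Ints_diff) auto
    with False show False by (simp add: algebra_simps)
  qed
  with False show ?thesis by (simp add: initial_def fun_eq_iff mvec_def)
qed

end

theorem mainTheorem10:
  fixes d :: nat and a :: "'n::finite \<Rightarrow> complex fls"
  assumes "d \<ge> 1" and "card (UNIV :: 'n set) \<ge> 2" and "inj a"
    and "\<forall>i. \<forall>k \<le> 0. fls_nth (a i) k = 0"
  shows "bij_betw (mvec (magic d a)) Fbar Fbar \<and>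
    (\<forall>r w. w \<in> Fbar \<and> val_ge d r w \<longrightarrow>
       val_ge d (r + 1) (the_inv_into Fbar (mvec (magic d a)) w) \<and>
       initial d (r + 1) (the_inv_into Fbar (mvec (magic d a)) w) =
         the_inv_into Fc (mvec (\<lambda>i j. of_rat (valmat d a i j))) (initial d r w))"
proof -
  interpret distinct_positive_roots d a using assms(1,3,4) by unfold_locales
  let ?M = "mvec (magic d a)" and ?A = "mvec (\<lambda>i j. of_rat (valmat d a i j))"
  have "val_ge d (r + 1) v \<and> initial d (r + 1) v = the_inv_into Fc ?A (initial d r w)"
    if "w \<in> Fbar" "val_ge d r w" and v: "v = the_inv_into Fbar ?M w" for r w v
  proof -
    have "v \<in> Fbar"
      unfolding v by (rule bij_betw_apply[OF bij_betw_the_inv_into[OF magic_bij_Fbar] \<open>w \<in> Fbar\<close>])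
    have w: "w = ?M v"
      unfolding v using f_the_inv_into_f_bij_betw[OF magic_bij_Fbar] \<open>w \<in> Fbar\<close> by simp
    have "val_ge d (r + 1) v" using val_ge_magic_preimage[OF \<open>v \<in> Fbar\<close>] that(2) w by simp
    moreover have "initial d (r + 1) v \<in> Fc" using \<open>v \<in> Fbar\<close> by (rule initial_in_Fc)
    ultimately show ?thesis unfolding w initial_magic[OF \<open>val_ge d (r + 1) v\<close>]
      using the_inv_into_f_f[OF valmat_inj_on_Fc] by simp
  qed
  then show ?thesis using magic_bij_Fbar by blast
qed

end
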